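(* Let ${\overline V}$ be a smooth vector field on a spacetime domain $\Omega\subset\mathbb R^{1+3}$ with $\Box{\overline V}=0$ in $\Omega$. Then for every integer $k\geq0$, \[ \Box D_{\overline V}^k {\overline V}= G_k\qquad\text{in }\Omega, \] where $G_k$ is a linear combination of terms of the form \[ (\nabla D_{\overline V}^{k_1}{\overline V})\cdots(\nabla D_{\overline V}^{k_p}{\overline V})(\nabla^{(2)} D_{\overline V}^{k_{p+1}}{\overline V}),\qquad k_1+\dots+k_{p+1}\leq k-1 \] (in particular $G_0=0$).
   Context: $\mathbb R^{1+3}$ with coordinates $(x^0,\dots,x^3)$ and Minkowski metric $m=\mathrm{diag}(-1,1,1,1)$; indices raised/lowered with $m$, $\nabla_\mu=\partial/\partial x^\mu$, $\nabla^{(2)}$ the spacetime Hessian, $\Box=\nabla^\mu\nabla_\mu$, $D_{\overline V}={\overline V}^\mu\nabla_\mu$. Products are schematic, with indices contracted using $m$. *)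

theory Defs
  imports "HOL-Analysis.Analysis"
begin

text \<open>Spacetime R^{1+3} is modelled as real^4; the index type 4 has elements 0,1,2,3,
  with 0 the time coordinate.\<close>

type_synonym pt = "real ^ 4"

text \<open>Minkowski metric m = diag(-1,1,1,1) (diagonal entries; m is its own inverse).\<close>
definition mink :: "4 \<Rightarrow> real" where
  "mink i = (if i = 0 then -1 else 1)"

definition pd :: "4 \<Rightarrow> (pt \<Rightarrow> real) \<Rightarrow> pt \<Rightarrow> real" where
  "pd i f x = frechet_derivative f (at x) (axis i 1)"

fun iter_pd :: "4 list \<Rightarrow> (pt \<Rightarrow> real) \<Rightarrow> pt \<Rightarrow> real" where
  "iter_pd [] f = f"
| "iter_pd (i # is) f = pd i (iter_pd is f)"

definition smooth_on :: "pt set \<Rightarrow> (pt \<Rightarrow> real) \<Rightarrow> bool" where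
  "smooth_on \<Omega> f \<longleftrightarrow> (\<forall>is. \<forall>x\<in>\<Omega>. iter_pd is f differentiable (at x))"

definition comp :: "(pt \<Rightarrow> real ^ 4) \<Rightarrow> 4 \<Rightarrow> pt \<Rightarrow> real" where
  "comp V a = (\<lambda>x. V x $ a)"

definition smooth_vf :: "pt set \<Rightarrow> (pt \<Rightarrow> real ^ 4) \<Rightarrow> bool" where
  "smooth_vf \<Omega> V \<longleftrightarrow> (\<forall>a. smooth_on \<Omega> (comp V a))"

definition box :: "(pt \<Rightarrow> real) \<Rightarrow> pt \<Rightarrow> real" where
  "box f x = (\<Sum>i\<in>UNIV. mink i * pd i (pd i f) x)"

definition box_vf :: "(pt \<Rightarrow> real ^ 4) \<Rightarrow> pt \<Rightarrow> real ^ 4" where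
  "box_vf W x = (\<chi> a. box (comp W a) x)"

definition DV :: "(pt \<Rightarrow> real ^ 4) \<Rightarrow> (pt \<Rightarrow> real ^ 4) \<Rightarrow> pt \<Rightarrow> real ^ 4" where
  "DV V W x = (\<chi> a. \<Sum>mu\<in>UNIV. V x $ mu * pd mu (comp W a) x)"

fun DVpow :: "(pt \<Rightarrow> real ^ 4) \<Rightarrow> nat \<Rightarrow> pt \<Rightarrow> real ^ 4" where
  "DVpow V 0 = V"
| "DVpow V (Suc k) = DV V (DVpow V k)"

text \<open>A monomial (one term of the schematic linear combination):
  (c, firsts, (j, c1, d1, e)) stands for the product
    c * prod_{(ki, ai, bi) in firsts} nabla_{ai} (D_V^{ki} V)^{bi}
      * nabla_{c1} nabla_{d1} (D_V^{j} V)^{e},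
  i.e. a component of (nabla D^{k_1}V)...(nabla D^{k_p}V)(nabla^2 D^{k_{p+1}}V)
  with a constant coefficient (index contractions with m give constant coefficients).\<close>
type_synonym monomial = "real \<times> (nat \<times> 4 \<times> 4) list \<times> (nat \<times> 4 \<times> 4 \<times> 4)"

fun eval_mono :: "(pt \<Rightarrow> real ^ 4) \<Rightarrow> monomial \<Rightarrow> pt \<Rightarrow> real" where
  "eval_mono V (c, fs, (j, c1, d1, e)) x =
     c * (\<Prod>(ki, ai, bi)\<leftarrow>fs. pd ai (comp (DVpow V ki) bi) x)
       * pd c1 (pd d1 (comp (DVpow V j) e)) x"

text \<open>Admissibility: k_1 + ... + k_{p+1} \<le> k - 1 (as integers; so no term is admissible for k = 0).\<close>
fun admissible :: "nat \<Rightarrow> monomial \<Rightarrow> bool" where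
  "admissible k (c, fs, (j, c1, d1, e)) \<longleftrightarrow> (\<Sum>(ki, ai, bi)\<leftarrow>fs. ki) + j + 1 \<le> k"

end

theory Submission
  imports Defs
begin

text \<open>Write \<open>W\<^sub>k = D\<^sub>V\<^sup>k V\<close>. Because \<open>\<box>V = 0\<close>, the product rule gives
  \<open>\<box>(D\<^sub>V h) = 2 m\<^sup>i\<^sup>j \<nabla>\<^sub>i V\<^sup>\<mu> \<nabla>\<^sub>j \<nabla>\<^sub>\<mu> h + D\<^sub>V \<box>h\<close>, so
  \<open>\<box>W\<^sub>k\<^sub>+\<^sub>1\<close> is an admissible monomial plus \<open>D\<^sub>V \<box>W\<^sub>k\<close>. By induction on \<open>k\<close> it therefore
  suffices that \<open>D\<^sub>V\<close> maps combinations of monomials of total order \<open>\<le> n\<close> to combinations of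
  order \<open>\<le> n + 1\<close>. By the product rule this reduces to the commutator identities
  \<open>D\<^sub>V \<nabla>\<^sub>a W\<^sub>k = \<nabla>\<^sub>a W\<^sub>k\<^sub>+\<^sub>1 - \<nabla>\<^sub>a V\<^sup>\<mu> \<nabla>\<^sub>\<mu> W\<^sub>k\<close> and its second-order analogue, whose only
  analytic input is the symmetry of second derivatives of smooth functions (Schwarz's theorem,
  proved below from the mean value theorem).\<close>

lemma pd_add:
  assumes "f differentiable at x" "g differentiable at x"
  shows "pd i (\<lambda>y. f y + g y) x = pd i f x + pd i g x"
proof -
  have "((\<lambda>y. f y + g y) has_derivative
      (\<lambda>h. frechet_derivative f (at x) h + frechet_derivative g (at x) h)) (at x)"
    using assms by (intro has_derivative_add frechet_derivative_works[THEN iffD1])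
  from frechet_derivative_at[OF this] show ?thesis
    unfolding pd_def by (simp add: fun_eq_iff)
qed

lemma pd_mult:
  assumes "f differentiable at x" "g differentiable at x"
  shows "pd i (\<lambda>y. f y * g y) x = f x * pd i g x + pd i f x * g x"
proof -
  have "((\<lambda>y. f y * g y) has_derivative
      (\<lambda>h. f x * frechet_derivative g (at x) h + frechet_derivative f (at x) h * g x)) (at x)"
    using assms by (intro has_derivative_mult frechet_derivative_works[THEN iffD1])
  from frechet_derivative_at[OF this] show ?thesis
    unfolding pd_def by (simp add: fun_eq_iff)
qed

lemma pd_const [simp]: "pd i (\<lambda>y. c) x = 0"
  unfolding pd_def by simp

lemma pd_cmult:
  assumes "f differentiable at x"
  shows "pd i (\<lambda>y. c * f y) x = c * pd i f x"
  using pd_mult[of "\<lambda>y. c" x f i] assms by simp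

lemma pd_diff:
  assumes "f differentiable at x" "g differentiable at x"
  shows "pd i (\<lambda>y. f y - g y) x = pd i f x - pd i g x"
proof -
  have "((\<lambda>y. f y - g y) has_derivative
      (\<lambda>h. frechet_derivative f (at x) h - frechet_derivative g (at x) h)) (at x)"
    using assms by (intro has_derivative_diff frechet_derivative_works[THEN iffD1])
  from frechet_derivative_at[OF this] show ?thesis
    unfolding pd_def by (simp add: fun_eq_iff)
qed

lemma pd_sum:
  assumes "finite A" "\<And>a. a \<in> A \<Longrightarrow> f a differentiable at x"
  shows "pd i (\<lambda>y. \<Sum>a\<in>A. f a y) x = (\<Sum>a\<in>A. pd i (f a) x)"
  using assms
proof (induction A rule: finite_induct)
  case (insert a A)
  have "(\<lambda>y. \<Sum>a\<in>A. f a y) differentiable at x"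
    using insert by (intro differentiable_sum) auto
  then show ?case
    using insert by (simp add: pd_add)
qed simp

lemma differentiable_sum_list:
  assumes "\<And>t. t \<in> set G \<Longrightarrow> F t differentiable at x"
  shows "(\<lambda>y. \<Sum>t\<leftarrow>G. F t y) differentiable at x"
  using assms by (induction G) (auto intro!: differentiable_add)

lemma pd_sum_list:
  assumes "\<And>t. t \<in> set G \<Longrightarrow> F t differentiable at x"
  shows "pd i (\<lambda>y. \<Sum>t\<leftarrow>G. F t y) x = (\<Sum>t\<leftarrow>G. pd i (F t) x)"
  using assms
proof (induction G)
  case (Cons a G)
  have "(\<lambda>y. \<Sum>t\<leftarrow>G. F t y) differentiable at x"
    using Cons.prems by (intro differentiable_sum_list) auto
  then show ?case
    using Cons by (simp add: pd_add)
qed simp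

lemma differentiable_transform_within_open:
  assumes "g differentiable at x" "open S" "x \<in> S" "\<And>y. y \<in> S \<Longrightarrow> f y = g y"
  shows "f differentiable at x"
proof -
  obtain g' where "(g has_derivative g') (at x)"
    using assms(1) by (auto simp: differentiable_def)
  then have "(f has_derivative g') (at x)"
    by (rule has_derivative_transform_within_open[OF _ assms(2,3)]) (simp add: assms(4))
  then show ?thesis
    by (auto simp: differentiable_def)
qed

text \<open>Where \<open>f\<close> is not differentiable, neither is \<open>g\<close>, and both sides are the same junk value
  (the SOME-choice of a derivative that does not exist).\<close>
lemma pd_transform_within_open:
  assumes "open S" "x \<in> S" "\<And>y. y \<in> S \<Longrightarrow> f y = g y"
  shows "pd i f x = pd i g x"
proof (cases "f differentiable at x")
  case True
  then show ?thesis
    unfolding pd_def using frechet_derivative_transform_within_open[OF True assms] by simp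
next
  case False
  then have "\<not> g differentiable at x"
    using differentiable_transform_within_open[OF _ assms(1,2), of g f] assms(3) by metis
  with False show ?thesis
    unfolding pd_def frechet_derivative_def differentiable_def by simp
qed

lemma has_derivative_along_line:
  fixes f :: "'a::real_normed_vector \<Rightarrow> real"
  assumes "f differentiable at (p + s *\<^sub>R u)"
  shows "((\<lambda>t. f (p + t *\<^sub>R u)) has_derivative
           (\<lambda>d. d * frechet_derivative f (at (p + s *\<^sub>R u)) u)) (at s within T)"
proof -
  have "((\<lambda>t. p + t *\<^sub>R u) has_derivative (\<lambda>d. d *\<^sub>R u)) (at s within T)"
    by (auto intro!: derivative_eq_intros)
  then have "((\<lambda>t. f (p + t *\<^sub>R u)) has_derivative
      (\<lambda>d. frechet_derivative f (at (p + s *\<^sub>R u)) (d *\<^sub>R u))) (at s within T)"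
    using has_derivative_compose assms frechet_derivative_works by blast
  moreover have "linear (frechet_derivative f (at (p + s *\<^sub>R u)))"
    using assms by (rule linear_frechet_derivative)
  ultimately show ?thesis
    by (simp add: linear_scale)
qed

section \<open>Symmetry of second derivatives\<close>

lemma second_difference_mean_value:
  fixes f :: "'a::real_normed_vector \<Rightarrow> real" and u v :: 'a
  defines "Du \<equiv> \<lambda>y. frechet_derivative f (at y) u"
  assumes h: "0 < h"
    and in_S: "\<And>s t. s \<in> {0..h} \<Longrightarrow> t \<in> {0..h} \<Longrightarrow> x + s *\<^sub>R u + t *\<^sub>R v \<in> S"
    and f_diff: "\<And>y. y \<in> S \<Longrightarrow> f differentiable at y"
    and Du_diff: "\<And>y. y \<in> S \<Longrightarrow> Du differentiable at y"
  obtains s t where "s \<in> {0..h}" "t \<in> {0..h}"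
    "f (x + h *\<^sub>R u + h *\<^sub>R v) - f (x + h *\<^sub>R u) - f (x + h *\<^sub>R v) + f x =
       h\<^sup>2 * frechet_derivative Du (at (x + s *\<^sub>R u + t *\<^sub>R v)) v"
proof -
  define g where "g s = f (x + h *\<^sub>R v + s *\<^sub>R u) - f (x + s *\<^sub>R u)" for s
  have "(g has_derivative (\<lambda>d. d * (Du (x + h *\<^sub>R v + s *\<^sub>R u) - Du (x + s *\<^sub>R u))))
      (at s within {0..h})" if "0 \<le> s" "s \<le> h" for s
  proof -
    have "x + h *\<^sub>R v + s *\<^sub>R u \<in> S" "x + s *\<^sub>R u \<in> S"
      using in_S[of s h] in_S[of s 0] that h by (simp_all add: add_ac)
    then have "(g has_derivative
        (\<lambda>d. d * Du (x + h *\<^sub>R v + s *\<^sub>R u) - d * Du (x + s *\<^sub>R u))) (at s within {0..h})"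
      unfolding g_def Du_def by (intro has_derivative_diff has_derivative_along_line f_diff)
    then show ?thesis
      by (simp add: algebra_simps)
  qed
  from mvt_simple[OF h this] obtain s where "0 < s" "s < h"
    and g_diff: "g h - g 0 = h * (Du (x + h *\<^sub>R v + s *\<^sub>R u) - Du (x + s *\<^sub>R u))"
    by auto
  then have s: "s \<in> {0..h}"
    by simp
  define \<phi> where "\<phi> t = Du (x + s *\<^sub>R u + t *\<^sub>R v)" for t
  have "(\<phi> has_derivative (\<lambda>d. d * frechet_derivative Du (at (x + s *\<^sub>R u + t *\<^sub>R v)) v))
      (at t within {0..h})" if "0 \<le> t" "t \<le> h" for t
    unfolding \<phi>_def using Du_diff[OF in_S[of s t]] that s by (intro has_derivative_along_line) auto
  from mvt_simple[OF h this] obtain t where "0 < t" "t < h"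
    and \<phi>_diff: "\<phi> h - \<phi> 0 = h * frechet_derivative Du (at (x + s *\<^sub>R u + t *\<^sub>R v)) v"
    by auto
  then have t: "t \<in> {0..h}"
    by simp
  have "g h - g 0 = f (x + h *\<^sub>R u + h *\<^sub>R v) - f (x + h *\<^sub>R u) - f (x + h *\<^sub>R v) + f x"
    unfolding g_def by (simp add: add_ac)
  moreover have "g h - g 0 = h * (\<phi> h - \<phi> 0)"
    unfolding g_diff \<phi>_def by (simp add: add_ac)
  ultimately show ?thesis
    using that[OF s t] \<phi>_diff by (simp add: power2_eq_square)
qed

lemma dist_add_scaleR_le:
  fixes a b :: "'a::real_normed_vector"
  assumes "s \<in> {0..h}" "t \<in> {0..h}"
  shows "dist (x + s *\<^sub>R a + t *\<^sub>R b) x \<le> h * (norm a + norm b)"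
proof -
  have "dist (x + s *\<^sub>R a + t *\<^sub>R b) x \<le> s * norm a + t * norm b"
    using norm_triangle_ineq[of "s *\<^sub>R a" "t *\<^sub>R b"] assms by (simp add: dist_norm)
  also have "\<dots> \<le> h * (norm a + norm b)"
    using assms by (simp add: distrib_left add_mono mult_right_mono)
  finally show ?thesis .
qed

text \<open>Both second differences of \<open>f\<close> at \<open>x\<close> with step \<open>h\<close>, taken along \<open>u, v\<close> and along \<open>v, u\<close>,
  are the same number; by the mean value theorem it is \<open>h\<^sup>2\<close> times either mixed derivative
  at suitable points near \<open>x\<close>.\<close>
lemma mixed_frechet_derivatives_meet_nearby:
  fixes f :: "'a::real_normed_vector \<Rightarrow> real" and u v :: 'a
  defines "Du \<equiv> \<lambda>y. frechet_derivative f (at y) u" and "Dv \<equiv> \<lambda>y. frechet_derivative f (at y) v"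
  assumes r: "0 < r" "ball x r \<subseteq> S"
    and f_diff: "\<And>y. y \<in> S \<Longrightarrow> f differentiable at y"
    and Du_diff: "\<And>y. y \<in> S \<Longrightarrow> Du differentiable at y"
    and Dv_diff: "\<And>y. y \<in> S \<Longrightarrow> Dv differentiable at y"
  obtains p q where "dist p x < r" "dist q x < r"
    "frechet_derivative Du (at p) v = frechet_derivative Dv (at q) u"
proof -
  define h where "h = r / (norm u + norm v + 1)"
  have norms: "norm u + norm v + 1 > 0"
    by (simp add: add_nonneg_pos)
  with r have h: "h > 0"
    by (simp add: h_def)
  have bound: "h * (norm u + norm v) < r"
    using h norms by (simp add: h_def field_simps)
  have near: "dist (x + s *\<^sub>R u + t *\<^sub>R v) x < r" "dist (x + s *\<^sub>R v + t *\<^sub>R u) x < r"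
    if "s \<in> {0..h}" "t \<in> {0..h}" for s t
    using dist_add_scaleR_le[OF that, of x u v] dist_add_scaleR_le[OF that, of x v u] bound
    by (simp_all add: add.commute)
  then have in_S: "x + s *\<^sub>R u + t *\<^sub>R v \<in> S" "x + s *\<^sub>R v + t *\<^sub>R u \<in> S"
    if "s \<in> {0..h}" "t \<in> {0..h}" for s t
    using that r(2) by (auto simp: dist_commute)
  obtain s t where st: "s \<in> {0..h}" "t \<in> {0..h}"
    and uv: "f (x + h *\<^sub>R u + h *\<^sub>R v) - f (x + h *\<^sub>R u) - f (x + h *\<^sub>R v) + f x =
      h\<^sup>2 * frechet_derivative Du (at (x + s *\<^sub>R u + t *\<^sub>R v)) v"
    using second_difference_mean_value[OF h in_S(1) f_diff Du_diff[unfolded Du_def]]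
    unfolding Du_def by blast
  obtain s' t' where st': "s' \<in> {0..h}" "t' \<in> {0..h}"
    and vu: "f (x + h *\<^sub>R v + h *\<^sub>R u) - f (x + h *\<^sub>R v) - f (x + h *\<^sub>R u) + f x =
      h\<^sup>2 * frechet_derivative Dv (at (x + s' *\<^sub>R v + t' *\<^sub>R u)) u"
    using second_difference_mean_value[OF h in_S(2) f_diff Dv_diff[unfolded Dv_def]]
    unfolding Dv_def by blast
  have swap: "x + h *\<^sub>R v + h *\<^sub>R u = x + h *\<^sub>R u + h *\<^sub>R v"
    by (simp add: algebra_simps)
  have "h\<^sup>2 * frechet_derivative Du (at (x + s *\<^sub>R u + t *\<^sub>R v)) v =
      h\<^sup>2 * frechet_derivative Dv (at (x + s' *\<^sub>R v + t' *\<^sub>R u)) u"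
    using uv vu unfolding swap by linarith
  then have "frechet_derivative Du (at (x + s *\<^sub>R u + t *\<^sub>R v)) v =
      frechet_derivative Dv (at (x + s' *\<^sub>R v + t' *\<^sub>R u)) u"
    using h by simp
  with near(1)[OF st] near(2)[OF st'] show ?thesis
    by (rule that)
qed

lemma frechet_derivative_mixed_commute:
  fixes f :: "'a::real_normed_vector \<Rightarrow> real" and u v :: 'a
  defines "Du \<equiv> \<lambda>y. frechet_derivative f (at y) u" and "Dv \<equiv> \<lambda>y. frechet_derivative f (at y) v"
  assumes S: "open S" "x \<in> S"
    and f_diff: "\<And>y. y \<in> S \<Longrightarrow> f differentiable at y"
    and Du_diff: "\<And>y. y \<in> S \<Longrightarrow> Du differentiable at y"
    and Dv_diff: "\<And>y. y \<in> S \<Longrightarrow> Dv differentiable at y"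
    and cont_uv: "isCont (\<lambda>y. frechet_derivative Du (at y) v) x"
    and cont_vu: "isCont (\<lambda>y. frechet_derivative Dv (at y) u) x"
  shows "frechet_derivative Du (at x) v = frechet_derivative Dv (at x) u"
proof (rule ccontr)
  define A where "A y = frechet_derivative Du (at y) v" for y
  define B where "B y = frechet_derivative Dv (at y) u" for y
  assume "\<not> ?thesis"
  then have d: "\<bar>A x - B x\<bar> > 0"
    by (simp add: A_def B_def)
  obtain \<delta>A where \<delta>A: "\<delta>A > 0" "\<And>y. dist y x < \<delta>A \<Longrightarrow> \<bar>A y - A x\<bar> < \<bar>A x - B x\<bar> / 2"
    using cont_uv[unfolded continuous_at_eps_delta, rule_format, OF half_gt_zero[OF d]]
    by (auto simp: A_def dist_real_def)
  obtain \<delta>B where \<delta>B: "\<delta>B > 0" "\<And>y. dist y x < \<delta>B \<Longrightarrow> \<bar>B y - B x\<bar> < \<bar>A x - B x\<bar> / 2"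
    using cont_vu[unfolded continuous_at_eps_delta, rule_format, OF half_gt_zero[OF d]]
    by (auto simp: B_def dist_real_def)
  obtain e where e: "e > 0" "ball x e \<subseteq> S"
    using S open_contains_ball by blast
  define r where "r = min e (min \<delta>A \<delta>B)"
  have "0 < r" "ball x r \<subseteq> S"
    using e \<delta>A \<delta>B by (auto simp: r_def)
  then obtain p q where "dist p x < r" "dist q x < r" "A p = B q"
    unfolding A_def B_def Du_def Dv_def
    by (rule mixed_frechet_derivatives_meet_nearby)
      (use f_diff Du_diff Dv_diff in \<open>simp_all add: Du_def Dv_def\<close>)
  with \<delta>A(2)[of p] \<delta>B(2)[of q] show False
    unfolding r_def by argo
qed

text \<open>Closure of \<^const>\<open>smooth_on\<close> under products is proved one order at a time: the derivative
  of a product is a sum of products of functions that are one order less regular.\<close>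
definition differentiable_upto :: "nat \<Rightarrow> pt set \<Rightarrow> (pt \<Rightarrow> real) \<Rightarrow> bool" where
  "differentiable_upto n S f \<longleftrightarrow>
     (\<forall>is. length is \<le> n \<longrightarrow> (\<forall>x\<in>S. iter_pd is f differentiable at x))"

lemma iter_pd_snoc: "iter_pd (is @ [i]) f = iter_pd is (pd i f)"
  by (induction "is") auto

lemma smooth_on_iff_differentiable_upto: "smooth_on S f \<longleftrightarrow> (\<forall>n. differentiable_upto n S f)"
  unfolding smooth_on_def differentiable_upto_def by blast

lemma differentiable_upto_0: "differentiable_upto 0 S f \<longleftrightarrow> (\<forall>x\<in>S. f differentiable at x)"
  unfolding differentiable_upto_def by simp

lemma differentiable_upto_Suc:
  "differentiable_upto (Suc n) S f \<longleftrightarrow>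
     (\<forall>x\<in>S. f differentiable at x) \<and> (\<forall>i. differentiable_upto n S (pd i f))"
proof
  assume f: "differentiable_upto (Suc n) S f"
  have "differentiable_upto n S (pd i f)" for i
    unfolding differentiable_upto_def
  proof (intro allI impI)
    fix "is" :: "4 list"
    assume "length is \<le> n"
    then show "\<forall>x\<in>S. iter_pd is (pd i f) differentiable at x"
      using f unfolding differentiable_upto_def iter_pd_snoc[symmetric] by simp
  qed
  with f show "(\<forall>x\<in>S. f differentiable at x) \<and> (\<forall>i. differentiable_upto n S (pd i f))"
    unfolding differentiable_upto_def by (metis iter_pd.simps(1) le0 list.size(3))
next
  assume f: "(\<forall>x\<in>S. f differentiable at x) \<and> (\<forall>i. differentiable_upto n S (pd i f))"
  show "differentiable_upto (Suc n) S f"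
    unfolding differentiable_upto_def
  proof (intro allI impI)
    fix "is" :: "4 list"
    assume "length is \<le> Suc n"
    then show "\<forall>x\<in>S. iter_pd is f differentiable at x"
      using f by (cases "is" rule: rev_cases) (auto simp: iter_pd_snoc differentiable_upto_def)
  qed
qed

lemma differentiable_upto_imp_differentiable:
  "differentiable_upto n S f \<Longrightarrow> x \<in> S \<Longrightarrow> f differentiable at x"
  unfolding differentiable_upto_def by (metis iter_pd.simps(1) le0 list.size(3))

lemma differentiable_upto_Suc_imp: "differentiable_upto (Suc n) S f \<Longrightarrow> differentiable_upto n S f"
  unfolding differentiable_upto_def by simp

lemma differentiable_upto_transform_within_open:
  assumes "open S" "\<And>y. y \<in> S \<Longrightarrow> f y = g y" "differentiable_upto n S g"
  shows "differentiable_upto n S f"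
  using assms(2,3)
proof (induction n arbitrary: f g)
  case 0
  then show ?case
    using differentiable_transform_within_open[OF _ assms(1), of g _ f]
    by (simp add: differentiable_upto_0)
next
  case (Suc n)
  have "pd i f y = pd i g y" if "y \<in> S" for i y
    using pd_transform_within_open[OF assms(1) that] Suc.prems(1) by blast
  then have "differentiable_upto n S (pd i f)" for i
    using Suc.IH[of "pd i f" "pd i g"] Suc.prems(2) by (simp add: differentiable_upto_Suc)
  moreover have "f differentiable at x" if "x \<in> S" for x
    using differentiable_transform_within_open[OF _ assms(1) that, of g f] Suc.prems
    by (simp add: differentiable_upto_Suc that)
  ultimately show ?case
    by (simp add: differentiable_upto_Suc)
qed

lemma differentiable_upto_const: "differentiable_upto n S (\<lambda>y. c)"
proof (induction n arbitrary: c)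
  case (Suc n)
  have "pd i (\<lambda>y. c) = (\<lambda>y. 0)" for i
    by (simp add: fun_eq_iff)
  with Suc show ?case
    by (simp add: differentiable_upto_Suc)
qed (simp add: differentiable_upto_0)

lemma differentiable_upto_add:
  assumes "open S" "differentiable_upto n S f" "differentiable_upto n S g"
  shows "differentiable_upto n S (\<lambda>y. f y + g y)"
  using assms(2,3)
proof (induction n arbitrary: f g)
  case 0
  then show ?case
    by (simp add: differentiable_upto_0 differentiable_add)
next
  case (Suc n)
  have "pd i (\<lambda>y. f y + g y) y = pd i f y + pd i g y" if "y \<in> S" for i y
    using Suc.prems that by (intro pd_add differentiable_upto_imp_differentiable)
  moreover have "differentiable_upto n S (\<lambda>y. pd i f y + pd i g y)" for i
    using Suc.prems by (intro Suc.IH) (simp_all add: differentiable_upto_Suc)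
  ultimately have "differentiable_upto n S (pd i (\<lambda>y. f y + g y))" for i
    by (rule differentiable_upto_transform_within_open[OF assms(1)]) auto
  with Suc.prems show ?case
    by (simp add: differentiable_upto_Suc differentiable_add)
qed

lemma differentiable_upto_mult:
  assumes "open S" "differentiable_upto n S f" "differentiable_upto n S g"
  shows "differentiable_upto n S (\<lambda>y. f y * g y)"
  using assms(2,3)
proof (induction n arbitrary: f g)
  case 0
  then show ?case
    by (simp add: differentiable_upto_0 differentiable_mult)
next
  case (Suc n)
  have "pd i (\<lambda>y. f y * g y) y = f y * pd i g y + pd i f y * g y" if "y \<in> S" for i y
    using Suc.prems that by (intro pd_mult differentiable_upto_imp_differentiable)
  moreover have "differentiable_upto n S (\<lambda>y. f y * pd i g y + pd i f y * g y)" for i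
    using Suc.prems differentiable_upto_Suc_imp
    by (intro differentiable_upto_add[OF assms(1)] Suc.IH) (simp_all add: differentiable_upto_Suc)
  ultimately have "differentiable_upto n S (pd i (\<lambda>y. f y * g y))" for i
    by (rule differentiable_upto_transform_within_open[OF assms(1)]) auto
  with Suc.prems show ?case
    by (simp add: differentiable_upto_Suc differentiable_mult)
qed

lemma smooth_on_imp_differentiable: "smooth_on S f \<Longrightarrow> x \<in> S \<Longrightarrow> f differentiable at x"
  by (meson differentiable_upto_imp_differentiable smooth_on_iff_differentiable_upto)

lemma smooth_on_pd: "smooth_on S f \<Longrightarrow> smooth_on S (pd i f)"
  by (meson differentiable_upto_Suc smooth_on_iff_differentiable_upto)

lemma smooth_on_const: "smooth_on S (\<lambda>y. c)"
  by (simp add: smooth_on_iff_differentiable_upto differentiable_upto_const)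

lemma smooth_on_add:
  "open S \<Longrightarrow> smooth_on S f \<Longrightarrow> smooth_on S g \<Longrightarrow> smooth_on S (\<lambda>y. f y + g y)"
  by (simp add: smooth_on_iff_differentiable_upto differentiable_upto_add)

lemma smooth_on_mult:
  "open S \<Longrightarrow> smooth_on S f \<Longrightarrow> smooth_on S g \<Longrightarrow> smooth_on S (\<lambda>y. f y * g y)"
  by (simp add: smooth_on_iff_differentiable_upto differentiable_upto_mult)

lemma smooth_on_sum:
  assumes "open S" "finite A" "\<And>a. a \<in> A \<Longrightarrow> smooth_on S (f a)"
  shows "smooth_on S (\<lambda>y. \<Sum>a\<in>A. f a y)"
  using assms(2,3)
  by (induction A rule: finite_induct) (simp_all add: smooth_on_const smooth_on_add[OF assms(1)])

lemma smooth_on_pd_commute: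
  assumes "open S" "smooth_on S f" "x \<in> S"
  shows "pd j (pd i f) x = pd i (pd j f) x"
proof -
  have pd_eq: "pd k g = (\<lambda>y. frechet_derivative g (at y) (axis k 1))" for k g
    by (simp add: pd_def fun_eq_iff)
  have "frechet_derivative (pd i f) (at x) (axis j 1) = frechet_derivative (pd j f) (at x) (axis i 1)"
    unfolding pd_eq[of _ f]
  proof (rule frechet_derivative_mixed_commute[OF assms(1,3)])
    fix y
    assume "y \<in> S"
    then show "f differentiable at y"
      "(\<lambda>y. frechet_derivative f (at y) (axis i 1)) differentiable at y"
      "(\<lambda>y. frechet_derivative f (at y) (axis j 1)) differentiable at y"
      using assms(2) unfolding pd_eq[symmetric]
      by (auto intro: smooth_on_imp_differentiable smooth_on_pd)
  next
    show "isCont (\<lambda>y. frechet_derivative (\<lambda>y. frechet_derivative f (at y) (axis i 1)) (at y) (axis j 1)) x"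
      "isCont (\<lambda>y. frechet_derivative (\<lambda>y. frechet_derivative f (at y) (axis j 1)) (at y) (axis i 1)) x"
      using assms(2,3) unfolding pd_eq[symmetric]
      by (auto intro!: differentiable_imp_continuous_within smooth_on_imp_differentiable smooth_on_pd)
  qed
  then show ?thesis
    by (simp add: pd_def)
qed

section \<open>The wave operator and the derivative along \<open>V\<close>\<close>

lemma box_mult:
  assumes S: "open S" "y \<in> S" and f: "smooth_on S f" and g: "smooth_on S g"
  shows "box (\<lambda>z. f z * g z) y =
    box f y * g y + 2 * (\<Sum>i\<in>UNIV. mink i * (pd i f y * pd i g y)) + f y * box g y"
proof -
  have "pd i (pd i (\<lambda>z. f z * g z)) y =
      f y * pd i (pd i g) y + 2 * (pd i f y * pd i g y) + pd i (pd i f) y * g y" for i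
  proof -
    have "pd i (pd i (\<lambda>z. f z * g z)) y = pd i (\<lambda>z. f z * pd i g z + pd i f z * g z) y"
      using f g by (intro pd_transform_within_open[OF S] pd_mult smooth_on_imp_differentiable)
    also have "\<dots> = pd i (\<lambda>z. f z * pd i g z) y + pd i (\<lambda>z. pd i f z * g z) y"
      using f g S by (intro pd_add differentiable_mult smooth_on_imp_differentiable smooth_on_pd)
    also have "pd i (\<lambda>z. f z * pd i g z) y = f y * pd i (pd i g) y + pd i f y * pd i g y"
      using f g S by (intro pd_mult smooth_on_imp_differentiable smooth_on_pd)
    also have "pd i (\<lambda>z. pd i f z * g z) y = pd i f y * pd i g y + pd i (pd i f) y * g y"
      using f g S by (intro pd_mult smooth_on_imp_differentiable smooth_on_pd)
    finally show ?thesis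
      by simp
  qed
  then show ?thesis
    unfolding box_def by (simp add: algebra_simps sum.distrib sum_distrib_left sum_distrib_right)
qed

lemma box_sum:
  assumes S: "open S" "y \<in> S" and "finite A" and f: "\<And>a. a \<in> A \<Longrightarrow> smooth_on S (f a)"
  shows "box (\<lambda>z. \<Sum>a\<in>A. f a z) y = (\<Sum>a\<in>A. box (f a) y)"
proof -
  have pd2_sum: "pd i (pd i (\<lambda>z. \<Sum>a\<in>A. f a z)) y = (\<Sum>a\<in>A. pd i (pd i (f a)) y)" for i
  proof -
    have "pd i (pd i (\<lambda>z. \<Sum>a\<in>A. f a z)) y = pd i (\<lambda>z. \<Sum>a\<in>A. pd i (f a) z) y"
      using f by (intro pd_transform_within_open[OF S] pd_sum \<open>finite A\<close> smooth_on_imp_differentiable)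
    also have "\<dots> = (\<Sum>a\<in>A. pd i (pd i (f a)) y)"
      using f S by (intro pd_sum \<open>finite A\<close> smooth_on_imp_differentiable smooth_on_pd)
    finally show ?thesis .
  qed
  show ?thesis
    unfolding box_def pd2_sum sum_distrib_left by (rule sum.swap)
qed

lemma box_pd:
  assumes S: "open S" "y \<in> S" and f: "smooth_on S f"
  shows "box (pd \<mu> f) y = pd \<mu> (box f) y"
proof -
  have "pd i (pd i (pd \<mu> f)) y = pd \<mu> (pd i (pd i f)) y" for i
  proof -
    have "pd i (pd i (pd \<mu> f)) y = pd i (pd \<mu> (pd i f)) y"
      using f by (intro pd_transform_within_open[OF S] smooth_on_pd_commute[OF S(1)])
    also have "\<dots> = pd \<mu> (pd i (pd i f)) y"
      using f by (intro smooth_on_pd_commute[OF S(1) _ S(2)] smooth_on_pd)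
    finally show ?thesis .
  qed
  then have "box (pd \<mu> f) y = (\<Sum>i\<in>UNIV. mink i * pd \<mu> (pd i (pd i f)) y)"
    unfolding box_def by simp
  also have "\<dots> = (\<Sum>i\<in>UNIV. pd \<mu> (\<lambda>z. mink i * pd i (pd i f) z) y)"
    using f S by (intro sum.cong refl pd_cmult[symmetric] smooth_on_imp_differentiable smooth_on_pd)
  also have "\<dots> = pd \<mu> (box f) y"
    unfolding box_def using f S
    by (intro pd_sum[symmetric]) (auto intro!: differentiable_mult smooth_on_imp_differentiable smooth_on_pd)
  finally show ?thesis .
qed

definition dir_pd :: "(pt \<Rightarrow> real ^ 4) \<Rightarrow> (pt \<Rightarrow> real) \<Rightarrow> pt \<Rightarrow> real" where
  "dir_pd V h y = (\<Sum>\<mu>\<in>UNIV. comp V \<mu> y * pd \<mu> h y)"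

lemma comp_DV: "comp (DV V W) a = dir_pd V (comp W a)"
  by (simp add: fun_eq_iff DV_def dir_pd_def comp_def)

lemma dir_pd_mult:
  assumes "f differentiable at y" "g differentiable at y"
  shows "dir_pd V (\<lambda>z. f z * g z) y = f y * dir_pd V g y + dir_pd V f y * g y"
  unfolding dir_pd_def using assms
  by (simp add: pd_mult algebra_simps sum.distrib sum_distrib_left sum_distrib_right)

lemma dir_pd_cmult:
  assumes "f differentiable at y"
  shows "dir_pd V (\<lambda>z. c * f z) y = c * dir_pd V f y"
  unfolding dir_pd_def using assms by (simp add: pd_cmult algebra_simps sum_distrib_left)

lemma dir_pd_transform_within_open:
  assumes "open S" "y \<in> S" "\<And>z. z \<in> S \<Longrightarrow> f z = g z"
  shows "dir_pd V f y = dir_pd V g y"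
  unfolding dir_pd_def using pd_transform_within_open[OF assms] by simp

lemma sum_sum_list_swap: "(\<Sum>a\<in>A. \<Sum>t\<leftarrow>G. f a t) = (\<Sum>t\<leftarrow>G. \<Sum>a\<in>A. f a t)"
  by (induction G) (simp_all add: sum.distrib)

lemma dir_pd_sum_list:
  assumes "\<And>t. t \<in> set G \<Longrightarrow> F t differentiable at y"
  shows "dir_pd V (\<lambda>z. \<Sum>t\<leftarrow>G. F t z) y = (\<Sum>t\<leftarrow>G. dir_pd V (F t) y)"
  unfolding dir_pd_def using assms
  by (simp add: pd_sum_list sum_list_const_mult[symmetric] sum_sum_list_swap)

lemma dir_pd_eq: "dir_pd V h = (\<lambda>y. \<Sum>\<mu>\<in>UNIV. comp V \<mu> y * pd \<mu> h y)"
  by (simp add: fun_eq_iff dir_pd_def)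

lemma comp_DVpow_Suc: "comp (DVpow V (Suc k)) b = dir_pd V (comp (DVpow V k) b)"
  by (simp add: comp_DV)

section \<open>Combinations of monomials\<close>

fun mono_order :: "monomial \<Rightarrow> nat" where
  "mono_order (c, fs, (j, c1, d1, e)) = (\<Sum>(ki, ai, bi)\<leftarrow>fs. ki) + j"

lemma admissible_iff_mono_order: "admissible k t \<longleftrightarrow> mono_order t + 1 \<le> k"
  by (cases t rule: prod_cases6) simp

definition mono_scale :: "real \<Rightarrow> monomial \<Rightarrow> monomial" where
  "mono_scale a = (\<lambda>(c, r). (a * c, r))"

definition mono_factor :: "nat \<times> 4 \<times> 4 \<Rightarrow> monomial \<Rightarrow> monomial" where
  "mono_factor f = (\<lambda>(c, fs, r). (c, f # fs, r))"

lemma eval_mono_scale: "eval_mono V (mono_scale a t) y = a * eval_mono V t y"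
  by (cases t rule: prod_cases6) (simp add: mono_scale_def)

lemma mono_order_scale: "mono_order (mono_scale a t) = mono_order t"
  by (cases t rule: prod_cases6) (simp add: mono_scale_def)

lemma eval_mono_factor:
  "eval_mono V (mono_factor (k, a, b) t) y = pd a (comp (DVpow V k) b) y * eval_mono V t y"
  by (cases t rule: prod_cases6) (simp add: mono_factor_def)

lemma mono_order_factor: "mono_order (mono_factor (k, a, b) t) = k + mono_order t"
  by (cases t rule: prod_cases6) (simp add: mono_factor_def)

context
  fixes \<Omega> :: "pt set" and V :: "pt \<Rightarrow> real ^ 4"
begin

definition mono_comb :: "nat \<Rightarrow> (pt \<Rightarrow> real) \<Rightarrow> bool" where
  "mono_comb n h \<longleftrightarrow>
     (\<exists>G. (\<forall>t\<in>set G. mono_order t \<le> n) \<and> (\<forall>y\<in>\<Omega>. h y = (\<Sum>t\<leftarrow>G. eval_mono V t y)))"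

lemma mono_comb_zero: "(\<And>y. y \<in> \<Omega> \<Longrightarrow> h y = 0) \<Longrightarrow> mono_comb n h"
  unfolding mono_comb_def by (intro exI[of _ "[]"]) simp

lemma mono_comb_eval_mono: "mono_order t \<le> n \<Longrightarrow> mono_comb n (eval_mono V t)"
  unfolding mono_comb_def by (intro exI[of _ "[t]"]) simp

lemma mono_comb_cong: "mono_comb n g \<Longrightarrow> (\<And>y. y \<in> \<Omega> \<Longrightarrow> f y = g y) \<Longrightarrow> mono_comb n f"
  unfolding mono_comb_def by simp

lemma mono_comb_mono: "mono_comb n f \<Longrightarrow> n \<le> m \<Longrightarrow> mono_comb m f"
  unfolding mono_comb_def by (meson order_trans)

lemma mono_comb_add:
  assumes "mono_comb n f" "mono_comb n g"
  shows "mono_comb n (\<lambda>y. f y + g y)"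
proof -
  obtain F where "\<forall>t\<in>set F. mono_order t \<le> n" "\<forall>y\<in>\<Omega>. f y = (\<Sum>t\<leftarrow>F. eval_mono V t y)"
    using assms(1) unfolding mono_comb_def by blast
  moreover obtain G where "\<forall>t\<in>set G. mono_order t \<le> n" "\<forall>y\<in>\<Omega>. g y = (\<Sum>t\<leftarrow>G. eval_mono V t y)"
    using assms(2) unfolding mono_comb_def by blast
  ultimately show ?thesis
    unfolding mono_comb_def by (intro exI[of _ "F @ G"]) auto
qed

lemma mono_comb_cmult:
  assumes "mono_comb n f"
  shows "mono_comb n (\<lambda>y. a * f y)"
proof -
  obtain F where "\<forall>t\<in>set F. mono_order t \<le> n" "\<forall>y\<in>\<Omega>. f y = (\<Sum>t\<leftarrow>F. eval_mono V t y)"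
    using assms unfolding mono_comb_def by blast
  then show ?thesis
    unfolding mono_comb_def
    by (intro exI[of _ "map (mono_scale a) F"])
      (simp add: mono_order_scale eval_mono_scale o_def sum_list_const_mult)
qed

lemma mono_comb_diff: "mono_comb n f \<Longrightarrow> mono_comb n g \<Longrightarrow> mono_comb n (\<lambda>y. f y - g y)"
  using mono_comb_add[of n f "\<lambda>y. -1 * g y"] mono_comb_cmult[of n g "-1"] by simp

lemma mono_comb_sum:
  "finite A \<Longrightarrow> (\<And>a. a \<in> A \<Longrightarrow> mono_comb n (f a)) \<Longrightarrow> mono_comb n (\<lambda>y. \<Sum>a\<in>A. f a y)"
  by (induction A rule: finite_induct) (simp_all add: mono_comb_zero mono_comb_add)

lemma mono_comb_sum_list:
  "(\<And>t. t \<in> set G \<Longrightarrow> mono_comb n (F t)) \<Longrightarrow> mono_comb n (\<lambda>y. \<Sum>t\<leftarrow>G. F t y)"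
  by (induction G) (simp_all add: mono_comb_zero mono_comb_add)

lemma mono_comb_factor:
  assumes "mono_comb n h"
  shows "mono_comb (k + n) (\<lambda>y. pd a (comp (DVpow V k) b) y * h y)"
proof -
  obtain G where "\<forall>t\<in>set G. mono_order t \<le> n" "\<forall>y\<in>\<Omega>. h y = (\<Sum>t\<leftarrow>G. eval_mono V t y)"
    using assms unfolding mono_comb_def by blast
  then show ?thesis
    unfolding mono_comb_def
    by (intro exI[of _ "map (mono_factor (k, a, b)) G"])
      (simp add: mono_order_factor eval_mono_factor o_def sum_list_const_mult)
qed

context
  assumes open_\<Omega>: "open \<Omega>" and smooth_V: "smooth_vf \<Omega> V"
begin

lemma smooth_on_comp_V: "smooth_on \<Omega> (comp V \<mu>)"
  using smooth_V by (simp add: smooth_vf_def)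

lemma smooth_on_dir_pd:
  assumes "smooth_on \<Omega> h"
  shows "smooth_on \<Omega> (dir_pd V h)"
  unfolding dir_pd_eq using assms
  by (intro smooth_on_sum[OF open_\<Omega>] smooth_on_mult[OF open_\<Omega>] smooth_on_comp_V smooth_on_pd) auto

lemma pd_dir_pd:
  assumes h: "smooth_on \<Omega> h" and y: "y \<in> \<Omega>"
  shows "pd a (dir_pd V h) y =
    (\<Sum>\<mu>\<in>UNIV. comp V \<mu> y * pd a (pd \<mu> h) y + pd a (comp V \<mu>) y * pd \<mu> h y)"
proof -
  have diff: "g differentiable at y" if "smooth_on \<Omega> g" for g
    using that y by (rule smooth_on_imp_differentiable)
  have "pd a (dir_pd V h) y = (\<Sum>\<mu>\<in>UNIV. pd a (\<lambda>z. comp V \<mu> z * pd \<mu> h z) y)"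
    unfolding dir_pd_eq using h
    by (intro pd_sum differentiable_mult diff smooth_on_pd smooth_on_comp_V) auto
  also have "\<dots> = (\<Sum>\<mu>\<in>UNIV. comp V \<mu> y * pd a (pd \<mu> h) y + pd a (comp V \<mu>) y * pd \<mu> h y)"
    using h by (intro sum.cong refl pd_mult diff smooth_on_pd smooth_on_comp_V)
  finally show ?thesis .
qed

lemma dir_pd_pd_commutator:
  assumes h: "smooth_on \<Omega> h" and y: "y \<in> \<Omega>"
  shows "dir_pd V (pd a h) y = pd a (dir_pd V h) y - (\<Sum>\<mu>\<in>UNIV. pd a (comp V \<mu>) y * pd \<mu> h y)"
  using smooth_on_pd_commute[OF open_\<Omega> h y]
  by (simp add: pd_dir_pd[OF h y] dir_pd_def sum.distrib)

lemma dir_pd_hessian_commutator: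
  assumes h: "smooth_on \<Omega> h" and y: "y \<in> \<Omega>"
  shows "dir_pd V (pd c (pd d h)) y = pd c (pd d (dir_pd V h)) y -
    (\<Sum>\<mu>\<in>UNIV. pd c (pd d (comp V \<mu>)) y * pd \<mu> h y + pd d (comp V \<mu>) y * pd c (pd \<mu> h) y
       + pd c (comp V \<mu>) y * pd d (pd \<mu> h) y)"
proof -
  define K where "K z = (\<Sum>\<mu>\<in>UNIV. pd d (comp V \<mu>) z * pd \<mu> h z)" for z
  have diff: "g differentiable at y" if "smooth_on \<Omega> g" for g
    using that y by (rule smooth_on_imp_differentiable)
  have smooth_K: "smooth_on \<Omega> K"
    unfolding K_def using h
    by (intro smooth_on_sum[OF open_\<Omega>] smooth_on_mult[OF open_\<Omega>] smooth_on_comp_V smooth_on_pd) auto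
  have pd_pd_h: "pd \<mu> (pd d h) y = pd d (pd \<mu> h) y" for \<mu>
    by (rule smooth_on_pd_commute[OF open_\<Omega> h y])
  have "dir_pd V (pd c (pd d h)) y =
      pd c (dir_pd V (pd d h)) y - (\<Sum>\<mu>\<in>UNIV. pd c (comp V \<mu>) y * pd \<mu> (pd d h) y)"
    using h y by (intro dir_pd_pd_commutator smooth_on_pd)
  also have "pd c (dir_pd V (pd d h)) y = pd c (\<lambda>z. pd d (dir_pd V h) z - K z) y"
    unfolding K_def using h by (intro pd_transform_within_open[OF open_\<Omega> y] dir_pd_pd_commutator)
  also have "\<dots> = pd c (pd d (dir_pd V h)) y - pd c K y"
    using h smooth_K by (intro pd_diff diff smooth_on_pd smooth_on_dir_pd)
  also have "pd c K y =
      (\<Sum>\<mu>\<in>UNIV. pd c (pd d (comp V \<mu>)) y * pd \<mu> h y + pd d (comp V \<mu>) y * pd c (pd \<mu> h) y)"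
    unfolding K_def using h
    by (simp add: pd_sum pd_mult diff differentiable_mult smooth_on_pd smooth_on_comp_V algebra_simps)
  finally show ?thesis
    by (simp add: pd_pd_h sum.distrib algebra_simps)
qed

lemma smooth_on_DVpow: "smooth_on \<Omega> (comp (DVpow V k) b)"
proof (induction k arbitrary: b)
  case 0
  then show ?case
    using smooth_on_comp_V by simp
next
  case (Suc k)
  then show ?case
    unfolding comp_DVpow_Suc by (rule smooth_on_dir_pd)
qed

lemma smooth_on_eval_mono: "smooth_on \<Omega> (eval_mono V t)"
proof (cases t rule: prod_cases6)
  case (fields c fs j c1 d1 e)
  have "smooth_on \<Omega> (\<lambda>x. \<Prod>(ki, ai, bi)\<leftarrow>fs. pd ai (comp (DVpow V ki) bi) x)"
  proof (induction fs)
    case (Cons f fs)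
    then show ?case
      by (cases f) (simp add: smooth_on_mult[OF open_\<Omega>] smooth_on_pd smooth_on_DVpow)
  qed (simp add: smooth_on_const)
  moreover have "eval_mono V t = (\<lambda>x. c * (\<Prod>(ki, ai, bi)\<leftarrow>fs. pd ai (comp (DVpow V ki) bi) x)
      * pd c1 (pd d1 (comp (DVpow V j) e)) x)"
    by (simp add: fields fun_eq_iff)
  ultimately show ?thesis
    by (simp add: smooth_on_mult[OF open_\<Omega>] smooth_on_const smooth_on_pd smooth_on_DVpow)
qed

lemma mono_comb_dir_pd_factor:
  assumes "mono_comb n h"
  shows "mono_comb (Suc k + n) (\<lambda>y. dir_pd V (pd a (comp (DVpow V k) b)) y * h y)"
proof (rule mono_comb_cong)
  show "mono_comb (Suc k + n) (\<lambda>y. pd a (comp (DVpow V (Suc k)) b) y * h y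
      - (\<Sum>\<mu>\<in>UNIV. pd a (comp (DVpow V 0) \<mu>) y * (pd \<mu> (comp (DVpow V k) b) y * h y)))"
  proof (rule mono_comb_diff)
    show "mono_comb (Suc k + n) (\<lambda>y. pd a (comp (DVpow V (Suc k)) b) y * h y)"
      using assms by (rule mono_comb_factor)
    have "mono_comb (Suc k + n)
        (\<lambda>y. pd a (comp (DVpow V 0) \<mu>) y * (pd \<mu> (comp (DVpow V k) b) y * h y))" for \<mu>
      using mono_comb_factor[OF mono_comb_factor[OF assms, of k \<mu> b], of 0 a \<mu>]
      by (rule mono_comb_mono) simp
    then show "mono_comb (Suc k + n)
        (\<lambda>y. \<Sum>\<mu>\<in>UNIV. pd a (comp (DVpow V 0) \<mu>) y * (pd \<mu> (comp (DVpow V k) b) y * h y))"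
      by (intro mono_comb_sum) auto
  qed
next
  fix y
  assume y: "y \<in> \<Omega>"
  show "dir_pd V (pd a (comp (DVpow V k) b)) y * h y = pd a (comp (DVpow V (Suc k)) b) y * h y
      - (\<Sum>\<mu>\<in>UNIV. pd a (comp (DVpow V 0) \<mu>) y * (pd \<mu> (comp (DVpow V k) b) y * h y))"
    unfolding dir_pd_pd_commutator[OF smooth_on_DVpow y] comp_DVpow_Suc
    by (simp add: algebra_simps sum_distrib_left)
qed

lemma mono_comb_dir_pd_hessian: "mono_comb (Suc j) (dir_pd V (pd c (pd d (comp (DVpow V j) e))))"
proof (rule mono_comb_cong)
  show "mono_comb (Suc j) (\<lambda>y. eval_mono V (1, [], (Suc j, c, d, e)) y -
    (\<Sum>\<mu>\<in>UNIV. eval_mono V (1, [(j, \<mu>, e)], (0, c, d, \<mu>)) y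
      + eval_mono V (1, [(0, d, \<mu>)], (j, c, \<mu>, e)) y
      + eval_mono V (1, [(0, c, \<mu>)], (j, d, \<mu>, e)) y))"
    by (intro mono_comb_diff mono_comb_sum mono_comb_add mono_comb_eval_mono) auto
qed (simp add: dir_pd_hessian_commutator smooth_on_DVpow comp_DV mult.commute)

lemma mono_comb_dir_pd_eval_mono_Nil:
  "mono_comb (Suc (mono_order (c, [], j, c1, d1, e))) (dir_pd V (eval_mono V (c, [], j, c1, d1, e)))"
proof -
  let ?H = "pd c1 (pd d1 (comp (DVpow V j) e))"
  have "mono_comb (Suc (mono_order (c, [], j, c1, d1, e))) (\<lambda>y. c * dir_pd V ?H y)"
    using mono_comb_cmult[OF mono_comb_dir_pd_hessian] by simp
  then show ?thesis
  proof (rule mono_comb_cong)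
    have eval: "eval_mono V (c, [], j, c1, d1, e) = (\<lambda>y. c * ?H y)"
      by (simp add: fun_eq_iff)
    fix y
    assume "y \<in> \<Omega>"
    then show "dir_pd V (eval_mono V (c, [], j, c1, d1, e)) y = c * dir_pd V ?H y"
      unfolding eval
      by (intro dir_pd_cmult smooth_on_imp_differentiable[where S = \<Omega>] smooth_on_pd smooth_on_DVpow)
  qed
qed

lemma mono_comb_dir_pd_eval_mono_factor:
  assumes "mono_comb (Suc (mono_order t)) (dir_pd V (eval_mono V t))"
  shows "mono_comb (Suc (mono_order (mono_factor (k, a, b) t)))
    (dir_pd V (eval_mono V (mono_factor (k, a, b) t)))"
proof -
  let ?F = "pd a (comp (DVpow V k) b)" and ?E = "eval_mono V t"
  have "mono_comb (Suc (k + mono_order t)) (\<lambda>y. ?F y * dir_pd V ?E y)"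
    using mono_comb_factor[OF assms, of k a b] by simp
  moreover have "mono_comb (Suc (k + mono_order t)) (\<lambda>y. dir_pd V ?F y * ?E y)"
    using mono_comb_dir_pd_factor[OF mono_comb_eval_mono[OF order_refl]] by simp
  ultimately have "mono_comb (Suc (k + mono_order t)) (\<lambda>y. ?F y * dir_pd V ?E y + dir_pd V ?F y * ?E y)"
    by (rule mono_comb_add)
  then show ?thesis
    unfolding mono_order_factor
  proof (rule mono_comb_cong)
    have eval: "eval_mono V (mono_factor (k, a, b) t) = (\<lambda>y. ?F y * ?E y)"
      by (simp add: fun_eq_iff eval_mono_factor)
    fix y
    assume "y \<in> \<Omega>"
    then show "dir_pd V (eval_mono V (mono_factor (k, a, b) t)) y =
        ?F y * dir_pd V ?E y + dir_pd V ?F y * ?E y"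
      unfolding eval
      by (intro dir_pd_mult smooth_on_imp_differentiable[where S = \<Omega>] smooth_on_pd smooth_on_DVpow
          smooth_on_eval_mono)
  qed
qed

lemma mono_comb_dir_pd_eval_mono: "mono_comb (Suc (mono_order t)) (dir_pd V (eval_mono V t))"
proof (cases t rule: prod_cases6)
  case (fields c fs j c1 d1 e)
  have "mono_comb (Suc (mono_order (c, fs, j, c1, d1, e))) (dir_pd V (eval_mono V (c, fs, j, c1, d1, e)))"
  proof (induction fs)
    case Nil
    show ?case
      by (rule mono_comb_dir_pd_eval_mono_Nil)
  next
    case (Cons f fs)
    obtain k a b where f: "f = (k, a, b)"
      by (cases f)
    have "(c, f # fs, j, c1, d1, e) = mono_factor (k, a, b) (c, fs, j, c1, d1, e)"
      by (simp add: f mono_factor_def)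
    then show ?case
      using mono_comb_dir_pd_eval_mono_factor[OF Cons.IH] by (simp only:)
  qed
  then show ?thesis
    using fields by simp
qed

lemma mono_comb_dir_pd:
  assumes "mono_comb n h"
  shows "mono_comb (Suc n) (dir_pd V h)"
proof -
  obtain G where G: "\<forall>t\<in>set G. mono_order t \<le> n" "\<forall>y\<in>\<Omega>. h y = (\<Sum>t\<leftarrow>G. eval_mono V t y)"
    using assms unfolding mono_comb_def by blast
  have "mono_comb (Suc n) (\<lambda>y. \<Sum>t\<leftarrow>G. dir_pd V (eval_mono V t) y)"
    using G(1) by (intro mono_comb_sum_list) (auto intro: mono_comb_mono[OF mono_comb_dir_pd_eval_mono])
  then show ?thesis
  proof (rule mono_comb_cong)
    fix y
    assume y: "y \<in> \<Omega>"
    have "dir_pd V h y = dir_pd V (\<lambda>z. \<Sum>t\<leftarrow>G. eval_mono V t z) y"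
      using G(2) by (intro dir_pd_transform_within_open[OF open_\<Omega> y]) auto
    also have "\<dots> = (\<Sum>t\<leftarrow>G. dir_pd V (eval_mono V t) y)"
      using y by (intro dir_pd_sum_list smooth_on_imp_differentiable[OF smooth_on_eval_mono])
    finally show "dir_pd V h y = (\<Sum>t\<leftarrow>G. dir_pd V (eval_mono V t) y)" .
  qed
qed

context
  assumes wave: "\<forall>x\<in>\<Omega>. box_vf V x = 0"
begin

lemma box_comp_V: "y \<in> \<Omega> \<Longrightarrow> box (comp V \<mu>) y = 0"
  using wave unfolding box_vf_def by (metis vec_lambda_beta zero_index)

lemma box_dir_pd:
  assumes h: "smooth_on \<Omega> h" and y: "y \<in> \<Omega>"
  shows "box (dir_pd V h) y =
    (\<Sum>\<mu>\<in>UNIV. \<Sum>i\<in>UNIV. 2 * mink i * (pd i (comp V \<mu>) y * pd i (pd \<mu> h) y)) + dir_pd V (box h) y"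
proof -
  have "box (dir_pd V h) y = (\<Sum>\<mu>\<in>UNIV. box (\<lambda>z. comp V \<mu> z * pd \<mu> h z) y)"
    unfolding dir_pd_eq using h
    by (intro box_sum[OF open_\<Omega> y] smooth_on_mult[OF open_\<Omega>] smooth_on_comp_V
        smooth_on_pd) auto
  also have "\<dots> = (\<Sum>\<mu>\<in>UNIV. 2 * (\<Sum>i\<in>UNIV. mink i * (pd i (comp V \<mu>) y * pd i (pd \<mu> h) y))
      + comp V \<mu> y * pd \<mu> (box h) y)"
    using h by (simp add: box_mult[OF open_\<Omega> y] box_pd[OF open_\<Omega> y] box_comp_V[OF y] smooth_on_pd
        smooth_on_comp_V)
  also have "\<dots> = (\<Sum>\<mu>\<in>UNIV. \<Sum>i\<in>UNIV. 2 * mink i * (pd i (comp V \<mu>) y * pd i (pd \<mu> h) y))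
      + dir_pd V (box h) y"
    unfolding dir_pd_def sum.distrib sum_distrib_left by (simp add: mult.assoc)
  finally show ?thesis .
qed

lemma mono_comb_box_DVpow: "mono_comb k (box (comp (DVpow V (Suc k)) b))"
proof -
  have step: "mono_comb k (box (comp (DVpow V (Suc k)) b))"
    if "mono_comb k (dir_pd V (box (comp (DVpow V k) b)))" for k b
  proof (rule mono_comb_cong)
    show "mono_comb k (\<lambda>y. (\<Sum>\<mu>\<in>UNIV. \<Sum>i\<in>UNIV. eval_mono V (2 * mink i, [(0, i, \<mu>)], (k, i, \<mu>, b)) y)
        + dir_pd V (box (comp (DVpow V k) b)) y)"
      by (intro mono_comb_add mono_comb_sum mono_comb_eval_mono that) auto
  qed (simp add: comp_DV box_dir_pd smooth_on_DVpow mult.assoc)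
  show ?thesis
  proof (induction k arbitrary: b)
    case 0
    have "mono_comb 0 (dir_pd V (box (comp (DVpow V 0) b)))"
    proof (rule mono_comb_zero)
      fix y
      assume y: "y \<in> \<Omega>"
      have "dir_pd V (box (comp V b)) y = dir_pd V (\<lambda>z. 0) y"
        using box_comp_V by (intro dir_pd_transform_within_open[OF open_\<Omega> y])
      then show "dir_pd V (box (comp (DVpow V 0) b)) y = 0"
        by (simp add: dir_pd_def)
    qed
    then show ?case
      by (rule step)
  next
    case (Suc k)
    show ?case
      by (rule step[OF mono_comb_dir_pd[OF Suc.IH]])
  qed
qed

end

end

end

theorem lemma2p8:
  fixes \<Omega> :: "pt set" and V :: "pt \<Rightarrow> real ^ 4" and k :: nat
  assumes "open \<Omega>"
    and "smooth_vf \<Omega> V"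
    and "\<forall>x\<in>\<Omega>. box_vf V x = 0"
  shows "\<exists>G :: 4 \<Rightarrow> monomial list.
           (\<forall>a. \<forall>t\<in>set (G a). admissible k t) \<and>
           (\<forall>x\<in>\<Omega>. box_vf (DVpow V k) x = (\<chi> a. \<Sum>t\<leftarrow>G a. eval_mono V t x))"
proof (cases k)
  case 0
  then show ?thesis
    using assms(3) by (intro exI[of _ "\<lambda>_. []"]) (simp add: vec_eq_iff)
next
  case (Suc n)
  have "\<forall>b. \<exists>G. (\<forall>t\<in>set G. mono_order t \<le> n) \<and>
      (\<forall>x\<in>\<Omega>. box (comp (DVpow V k) b) x = (\<Sum>t\<leftarrow>G. eval_mono V t x))"
    using mono_comb_box_DVpow[OF assms] unfolding Suc mono_comb_def by blast
  then obtain G where "\<forall>t\<in>set (G b). mono_order t \<le> n"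
    "\<forall>x\<in>\<Omega>. box (comp (DVpow V k) b) x = (\<Sum>t\<leftarrow>G b. eval_mono V t x)" for b
    by metis
  then show ?thesis
    using Suc by (intro exI[of _ G]) (auto simp: admissible_iff_mono_order box_vf_def vec_eq_iff)
qed

end
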